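(* Let $S$ be a semigroup such that for every finite coloring of $S$ there is a monochromatic proper IP set. Then for every finite coloring of $S$ there are infinitely many pairwise disjoint monochromatic proper IP sets (hence, since there are finitely many colors, infinitely many pairwise disjoint proper IP sets all of the same color).
   Context: Semigroups are written additively and are not assumed commutative. For a sequence $a_1,a_2,\dotsc$, $\mathrm{FS}(a_1,a_2,\dotsc):=\{a_{i_1}+\dotsb+a_{i_m}: m\ge1,\ i_1<\dotsb<i_m\}$. A proper IP set is a set containing $\mathrm{FS}(b_1,b_2,\dotsc)$ for some injective sequence $b_1,b_2,\dotsc$. A finite coloring of $S$ is a map from $S$ to a finite set; a subset is monochromatic if the coloring is constant on it. *)

theory Defs
  imports Main
begin

text \<open>Ordered finite sum b i1 + ... + bim of a nonempty index list (semigroups need not be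
  commutative nor have a zero).\<close>
fun ssum :: "(nat \<Rightarrow> 'a::semigroup_add) \<Rightarrow> nat list \<Rightarrow> 'a" where
  "ssum b [i] = b i"
| "ssum b (i # j # is) = b i + ssum b (j # is)"

definition FS :: "(nat \<Rightarrow> 'a::semigroup_add) \<Rightarrow> 'a set" where
  "FS b = {ssum b is | is. is \<noteq> [] \<and> sorted_wrt (<) is}"

definition proper_IP :: "'a::semigroup_add set \<Rightarrow> bool" where
  "proper_IP A \<longleftrightarrow> (\<exists>b. inj b \<and> FS b \<subseteq> A)"

definition finite_coloring :: "('a \<Rightarrow> 'c) \<Rightarrow> bool" where
  "finite_coloring c \<longleftrightarrow> finite (range c)"

definition monochromatic :: "('a \<Rightarrow> 'c) \<Rightarrow> 'a set \<Rightarrow> bool" where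
  "monochromatic c A \<longleftrightarrow> (\<exists>k. \<forall>x\<in>A. c x = k)"

end

theory Submission
  imports Defs
begin

text \<open>
  Call \<open>F\<close> IP-partition-regular if every finite colouring has a monochromatic proper IP set
  inside \<open>F\<close>. Such an \<open>F\<close> always contains a proper IP set \<open>G\<close> with \<open>F - G\<close> still
  IP-partition-regular; splitting off such sets repeatedly from a regular colour class gives the
  theorem. If no \<open>G\<close> could be split off, the sets \<open>B\<close> with \<open>F \<inter> B\<close> IP-partition-regular would
  form a nonprincipal ultrafilter \<open>p\<close> with \<open>p \<subseteq> p + p\<close> that contains every proper IP subset
  of \<open>F\<close>. The Galvin--Glazer construction in \<open>p\<close>, run while keeping the finite sums of the
  even-indexed terms and those of the odd-indexed terms apart (together with their translates
  \<open>s + p\<close>), produces an injective sequence whose two halves generate disjoint proper IP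
  subsets of \<open>F\<close>; but disjoint sets cannot both belong to \<open>p\<close>.
\<close>

lemma ssum_append:
  "xs \<noteq> [] \<Longrightarrow> ys \<noteq> [] \<Longrightarrow> ssum b (xs @ ys) = ssum b xs + ssum b ys"
proof (induction xs rule: induct_list012)
  case (2 x)
  then show ?case by (cases ys) auto
next
  case (3 x y zs)
  then show ?case by (simp add: add.assoc)
qed simp

lemma ssum_map: "xs \<noteq> [] \<Longrightarrow> ssum (b \<circ> f) xs = ssum b (map f xs)"
  by (induction xs rule: induct_list012) auto

lemma ssum_in_FS: "ks \<noteq> [] \<Longrightarrow> sorted_wrt (<) ks \<Longrightarrow> ssum b ks \<in> FS b"
  unfolding FS_def by blast

lemma FS_comp_subset:
  assumes "strict_mono f"
  shows "FS (b \<circ> f) \<subseteq> {ssum b ks | ks. ks \<noteq> [] \<and> sorted_wrt (<) ks \<and> set ks \<subseteq> range f}"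
    (is "_ \<subseteq> ?R")
proof
  fix x assume "x \<in> FS (b \<circ> f)"
  then obtain ks where ks: "ks \<noteq> []" "sorted_wrt (<) ks" "x = ssum (b \<circ> f) ks"
    unfolding FS_def by auto
  then have "x = ssum b (map f ks)" by (simp add: ssum_map)
  moreover have "sorted_wrt (<) (map f ks)"
    using ks(2) assms
    by (auto simp: sorted_wrt_map strict_mono_def elim: sorted_wrt_mono_rel[rotated])
  ultimately show "x \<in> ?R" using ks(1) by fastforce
qed

lemma FS_shift_subset:
  "FS (\<lambda>i. b (i + m)) \<subseteq> {ssum b ks | ks. ks \<noteq> [] \<and> sorted_wrt (<) ks \<and> (\<forall>k\<in>set ks. m \<le> k)}"
    (is "_ \<subseteq> ?R")
proof
  fix y assume "y \<in> FS (\<lambda>i. b (i + m))"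
  then have "y \<in> FS (b \<circ> (\<lambda>i. i + m))" by (simp add: o_def)
  then obtain ks where
    "y = ssum b ks" "ks \<noteq> []" "sorted_wrt (<) ks" "set ks \<subseteq> range (\<lambda>i. i + m)"
    using FS_comp_subset[of "\<lambda>i. i + m" b] strict_monoI[of "\<lambda>i::nat. i + m"] by auto
  then show "y \<in> ?R" by force
qed

lemma FS_shift: "FS (\<lambda>i. b (i + m)) \<subseteq> FS b"
  using FS_shift_subset[of b m] ssum_in_FS by blast

lemma FS_add_shift:
  assumes "x \<in> FS b"
  obtains m where "\<And>y. y \<in> FS (\<lambda>i. b (i + m)) \<Longrightarrow> x + y \<in> FS b"
proof -
  obtain ks where ks: "ks \<noteq> []" "sorted_wrt (<) ks" "x = ssum b ks"
    using assms unfolding FS_def by auto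
  have "x + y \<in> FS b" if "y \<in> FS (\<lambda>i. b (i + Suc (Max (set ks))))" for y
  proof -
    have "y \<in> {ssum b js | js. js \<noteq> [] \<and> sorted_wrt (<) js
        \<and> (\<forall>j\<in>set js. Suc (Max (set ks)) \<le> j)}"
      using that FS_shift_subset by blast
    then obtain js where js: "js \<noteq> []" "sorted_wrt (<) js" "y = ssum b js"
        "\<forall>j\<in>set js. Max (set ks) < j"
      by (auto simp: Suc_le_eq)
    have "\<forall>k\<in>set ks. \<forall>j\<in>set js. k < j"
      using js(4) by (meson List.finite_set Max_ge le_less_trans)
    then have "sorted_wrt (<) (ks @ js)"
      using ks(2) js(2) by (simp add: sorted_wrt_append)
    moreover have "x + y = ssum b (ks @ js)" using ks js by (simp add: ssum_append)
    ultimately show ?thesis using ks(1) by (simp add: ssum_in_FS)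
  qed
  then show thesis by (rule that)
qed

lemma not_proper_IP_singleton: "\<not> proper_IP {t}"
proof
  assume "proper_IP {t}"
  then obtain b where b: "inj b" "FS b \<subseteq> {t}" unfolding proper_IP_def by blast
  have "b i = t" for i using ssum_in_FS[of "[i]" b] b(2) by auto
  then have "b 0 = b 1" by simp
  then show False using b(1) by (metis injD zero_neq_one)
qed

lemma proper_IP_mono: "proper_IP A \<Longrightarrow> A \<subseteq> B \<Longrightarrow> proper_IP B"
  unfolding proper_IP_def by blast

lemma proper_IP_FS_comp: "inj b \<Longrightarrow> strict_mono f \<Longrightarrow> proper_IP (FS (b \<circ> f))"
  unfolding proper_IP_def using inj_compose strict_mono_imp_inj_on by blast

definition parity_sums :: "(nat \<Rightarrow> 'a::semigroup_add) \<Rightarrow> nat \<Rightarrow> bool \<Rightarrow> 'a set" where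
  "parity_sums b n p =
     {ssum b ks | ks. ks \<noteq> [] \<and> sorted_wrt (<) ks \<and> (\<forall>i\<in>set ks. i < n \<and> even i = p)}"

definition extend_sums :: "'a::semigroup_add set \<Rightarrow> 'a \<Rightarrow> 'a set" where
  "extend_sums X y = insert y (X \<union> (\<lambda>s. s + y) ` X)"

lemma parity_sums_0: "parity_sums b 0 p = {}"
  unfolding parity_sums_def by (auto simp: neq_Nil_conv)

lemma parity_sums_mono: "n \<le> m \<Longrightarrow> parity_sums b n p \<subseteq> parity_sums b m p"
  unfolding parity_sums_def by fastforce

lemma parity_sums_Suc_other: "even n \<noteq> p \<Longrightarrow> parity_sums b (Suc n) p = parity_sums b n p"
  unfolding parity_sums_def by (metis less_Suc_eq)

lemma extend_sums_parity_sums_subset: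
  "extend_sums (parity_sums b n (even n)) (b n) \<subseteq> parity_sums b (Suc n) (even n)"
proof
  fix x assume "x \<in> extend_sums (parity_sums b n (even n)) (b n)"
  then consider "x = b n" | "x \<in> parity_sums b n (even n)"
    | s where "s \<in> parity_sums b n (even n)" "x = s + b n"
    unfolding extend_sums_def by blast
  then show "x \<in> parity_sums b (Suc n) (even n)"
  proof cases
    case 1
    then show ?thesis unfolding parity_sums_def by (intro CollectI exI[of _ "[n]"]) auto
  next
    case 2
    then show ?thesis using parity_sums_mono[of n "Suc n" b] by auto
  next
    case 3
    then obtain ks where ks: "ks \<noteq> []" "sorted_wrt (<) ks" "s = ssum b ks"
        "\<forall>i\<in>set ks. i < n \<and> even i = even n"
      unfolding parity_sums_def by auto
    then have "x = ssum b (ks @ [n])" using 3 by (simp add: ssum_append)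
    moreover have "sorted_wrt (<) (ks @ [n])" using ks(2,4) by (simp add: sorted_wrt_append)
    ultimately show ?thesis
      unfolding parity_sums_def using ks(1,4) by (intro CollectI exI[of _ "ks @ [n]"]) auto
  qed
qed

lemma parity_sums_Suc_same:
  "parity_sums b (Suc n) (even n) = extend_sums (parity_sums b n (even n)) (b n)"
  (is "?L = extend_sums ?S (b n)")
proof (intro equalityI subsetI)
  fix x assume "x \<in> ?L"
  then obtain ks where ks: "ks \<noteq> []" "sorted_wrt (<) ks" "x = ssum b ks"
      "\<forall>i\<in>set ks. i < Suc n \<and> even i = even n"
    unfolding parity_sums_def by auto
  obtain ks' k where ks': "ks = ks' @ [k]" using ks(1) rev_exhaust by blast
  have below: "\<forall>i\<in>set ks'. i < k" "k \<le> n" using ks(2,4) ks' by (auto simp: sorted_wrt_append)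
  consider "k < n" | "k = n" "ks' = []" | "k = n" "ks' \<noteq> []" using below(2) by fastforce
  then show "x \<in> extend_sums ?S (b n)"
  proof cases
    case 1
    then have "x \<in> ?S" using ks below unfolding parity_sums_def ks' by fastforce
    then show ?thesis unfolding extend_sums_def by blast
  next
    case 2
    then show ?thesis using ks(3) unfolding ks' extend_sums_def by simp
  next
    case 3
    then have "ssum b ks' \<in> ?S"
      using ks(2,4) below unfolding parity_sums_def ks' by (fastforce simp: sorted_wrt_append)
    moreover have "x = ssum b ks' + b n" using ks(3) 3 unfolding ks' by (simp add: ssum_append)
    ultimately show ?thesis unfolding extend_sums_def by blast
  qed
qed (use extend_sums_parity_sums_subset in blast)

lemma FS_comp_subset_parity_sums:
  assumes "strict_mono f" "\<And>k. even (f k) = p"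
  shows "FS (b \<circ> f) \<subseteq> (\<Union>n. parity_sums b n p)"
proof
  fix x assume "x \<in> FS (b \<circ> f)"
  then obtain ks where ks: "x = ssum b ks" "ks \<noteq> []" "sorted_wrt (<) ks" "set ks \<subseteq> range f"
    using FS_comp_subset[OF assms(1)] by blast
  have "\<forall>i\<in>set ks. i < Suc (Max (set ks)) \<and> even i = p"
    using ks(4) assms(2) by (auto simp: le_imp_less_Suc)
  then have "x \<in> parity_sums b (Suc (Max (set ks))) p"
    unfolding parity_sums_def using ks(1-3) by blast
  then show "x \<in> (\<Union>n. parity_sums b n p)" by blast
qed

definition IP_partition_regular :: "'a::semigroup_add set \<Rightarrow> bool" where
  "IP_partition_regular F \<longleftrightarrow>
     (\<forall>d :: 'a \<Rightarrow> nat. finite_coloring d \<longrightarrow> (\<exists>A \<subseteq> F. proper_IP A \<and> monochromatic d A))"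

lemma IP_partition_regular_mono:
  "IP_partition_regular A \<Longrightarrow> A \<subseteq> B \<Longrightarrow> IP_partition_regular B"
  unfolding IP_partition_regular_def by (meson subset_trans)

lemma IP_partition_regular_imp_proper_IP: "IP_partition_regular F \<Longrightarrow> proper_IP F"
proof -
  assume "IP_partition_regular F"
  moreover have "finite_coloring (\<lambda>_::'a. 0::nat)" unfolding finite_coloring_def by simp
  ultimately obtain A where "A \<subseteq> F" "proper_IP A" unfolding IP_partition_regular_def by blast
  then show ?thesis using proper_IP_mono by blast
qed

lemma IP_partition_regular_Un:
  assumes "IP_partition_regular (A \<union> B)"
  shows "IP_partition_regular A \<or> IP_partition_regular B"
proof (rule ccontr)
  assume "\<not> ?thesis"
  then obtain dA dB :: "'a \<Rightarrow> nat" where fin: "finite_coloring dA" "finite_coloring dB"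
    and bad: "\<And>G. G \<subseteq> A \<Longrightarrow> proper_IP G \<Longrightarrow> \<not> monochromatic dA G"
             "\<And>G. G \<subseteq> B \<Longrightarrow> proper_IP G \<Longrightarrow> \<not> monochromatic dB G"
    unfolding IP_partition_regular_def by auto
  define d where "d x = (if x \<in> A then 2 * dA x else Suc (2 * dB x))" for x
  have "range d \<subseteq> (\<lambda>k. 2 * k) ` range dA \<union> (\<lambda>k. Suc (2 * k)) ` range dB"
    unfolding d_def by auto
  moreover have "finite ((\<lambda>k. 2 * k) ` range dA \<union> (\<lambda>k. Suc (2 * k)) ` range dB)"
    using fin unfolding finite_coloring_def by simp
  ultimately have "finite_coloring d" unfolding finite_coloring_def by (rule finite_subset)
  then obtain G where G: "G \<subseteq> A \<union> B" "proper_IP G" "monochromatic d G"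
    using assms unfolding IP_partition_regular_def by blast
  then obtain k where k: "\<And>x. x \<in> G \<Longrightarrow> d x = k" unfolding monochromatic_def by blast
  show False
  proof (cases "even k")
    case True
    then have "x \<in> A \<and> dA x = k div 2" if "x \<in> G" for x
      using k[OF that] unfolding d_def by (auto split: if_splits)
    then show False using bad(1)[of G] G(2) unfolding monochromatic_def by blast
  next
    case False
    then have "x \<in> B \<and> dB x = k div 2" if "x \<in> G" for x
      using k[OF that] G(1) that unfolding d_def by (auto split: if_splits)
    then show False using bad(2)[of G] G(2) unfolding monochromatic_def by blast
  qed
qed

lemma IP_partition_regular_Int_or_Diff:
  "IP_partition_regular A \<Longrightarrow> IP_partition_regular (A \<inter> B) \<or> IP_partition_regular (A - B)"
  using IP_partition_regular_Un[of "A \<inter> B" "A - B"] by (simp add: Int_Diff_Un)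

lemma not_IP_partition_regular_subset_singleton: "A \<subseteq> {t} \<Longrightarrow> \<not> IP_partition_regular A"
  using IP_partition_regular_imp_proper_IP proper_IP_mono not_proper_IP_singleton by blast

lemma IP_partition_regular_UN:
  "finite K \<Longrightarrow> IP_partition_regular (\<Union>k\<in>K. C k) \<Longrightarrow> \<exists>k\<in>K. IP_partition_regular (C k)"
proof (induction K rule: finite_induct)
  case empty
  then show ?case using not_IP_partition_regular_subset_singleton by (metis empty_subsetI UN_empty)
next
  case (insert k K)
  then show ?case using IP_partition_regular_Un[of "C k" "\<Union>k\<in>K. C k"] by auto
qed

lemma large_translates_if_large_proper_IP:
  fixes large :: "'a::semigroup_add set \<Rightarrow> bool"
  assumes mono: "\<And>A B. large A \<Longrightarrow> A \<subseteq> B \<Longrightarrow> large B"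
    and IP: "\<And>G. G \<subseteq> F \<Longrightarrow> proper_IP G \<Longrightarrow> large G"
    and "proper_IP (F \<inter> A)"
  shows "large {x. large {y. x + y \<in> A}}"
proof -
  obtain b where b: "inj b" "FS b \<subseteq> F \<inter> A" using assms(3) unfolding proper_IP_def by blast
  have tail: "large (FS (\<lambda>i. b (i + m)))" for m
  proof (rule IP)
    show "FS (\<lambda>i. b (i + m)) \<subseteq> F" using FS_shift b(2) by blast
    have "proper_IP (FS (b \<circ> (\<lambda>i. i + m)))"
      using b(1) by (rule proper_IP_FS_comp) (simp add: strict_mono_def)
    then show "proper_IP (FS (\<lambda>i. b (i + m)))" by (simp add: o_def)
  qed
  have "FS b \<subseteq> {x. large {y. x + y \<in> A}}"
  proof
    fix x assume "x \<in> FS b"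
    then obtain m where "\<And>y. y \<in> FS (\<lambda>i. b (i + m)) \<Longrightarrow> x + y \<in> FS b"
      by (rule FS_add_shift) blast
    then have "FS (\<lambda>i. b (i + m)) \<subseteq> {y. x + y \<in> A}" using b(2) by blast
    then show "x \<in> {x. large {y. x + y \<in> A}}" using tail mono by blast
  qed
  moreover have "large (FS b)" using IP b unfolding proper_IP_def by blast
  ultimately show ?thesis using mono by blast
qed

text \<open>
  \<open>large A\<close> stands for \<open>A \<in> p\<close> with \<open>p\<close> a nonprincipal ultrafilter on \<open>S\<close>; the last
  assumption is \<open>p \<subseteq> p + p\<close>, which for ultrafilters means \<open>p + p = p\<close>.
\<close>

locale free_idempotent_ultrafilter =
  fixes large :: "'a::semigroup_add set \<Rightarrow> bool"
  assumes large_mono: "large A \<Longrightarrow> A \<subseteq> B \<Longrightarrow> large B"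
    and large_Int: "large A \<Longrightarrow> large B \<Longrightarrow> large (A \<inter> B)"
    and large_Compl_iff: "large (- A) \<longleftrightarrow> \<not> large A"
    and not_large_singleton: "\<not> large {t}"
    and large_idempotent: "large A \<Longrightarrow> large {x. large {y. x + y \<in> A}}"
begin

lemma not_large_empty: "\<not> large {}"
  using large_mono not_large_singleton by blast

lemma large_nonempty: "large A \<Longrightarrow> \<exists>x. x \<in> A"
  using not_large_empty by (metis equals0I)

lemma large_Collect_not: "\<not> large {x. P x} \<Longrightarrow> large {x. \<not> P x}"
  using large_Compl_iff[of "{x. P x}"] by (simp add: Collect_neg_eq)

lemma large_conj: "large {x. P x} \<Longrightarrow> large {x. Q x} \<Longrightarrow> large {x. P x \<and> Q x}"
  using large_Int by (simp add: Collect_conj_eq)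

lemma large_Ball:
  "finite I \<Longrightarrow> (\<And>i. i \<in> I \<Longrightarrow> large {x. P i x}) \<Longrightarrow> large {x. \<forall>i\<in>I. P i x}"
proof (induction I rule: finite_induct)
  case empty
  then show ?case using large_Compl_iff[of "{}"] not_large_empty by simp
next
  case (insert i I)
  then show ?case using large_conj[of "P i"] by simp
qed

lemma large_notin_finite: "finite S \<Longrightarrow> large {x. x \<notin> S}"
proof -
  assume "finite S"
  moreover have "large {x. x \<noteq> s}" for s
    using large_Collect_not[of "\<lambda>x. x = s"] not_large_singleton by simp
  ultimately have "large {x. \<forall>s\<in>S. x \<noteq> s}" by (rule large_Ball)
  then show ?thesis by (rule large_mono) blast
qed

lemma large_of_large_translates: "large {x. large {y. x + y \<in> A}} \<Longrightarrow> large A"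
proof (rule ccontr)
  assume "large {x. large {y. x + y \<in> A}}" and "\<not> large A"
  then have "large {x. large {y. x + y \<in> A}} \<and> large {x. large {y. x + y \<in> - A}}"
    using large_idempotent large_Compl_iff by blast
  then obtain x where "large {y. x + y \<in> A}" "large {y. x + y \<in> - A}"
    using large_conj large_nonempty by blast
  then have "large ({y. x + y \<in> A} \<inter> {y. x + y \<in> - A})" by (rule large_Int)
  moreover have "{y. x + y \<in> A} \<inter> {y. x + y \<in> - A} = {}" by blast
  ultimately show False using not_large_empty by simp
qed

definition star :: "'a set \<Rightarrow> 'a set" where
  "star F = {x \<in> F. large {y. x + y \<in> F}}"

lemma star_subset: "star F \<subseteq> F"
  unfolding star_def by blast

lemma large_star: "large F \<Longrightarrow> large (star F)"
  using large_Int[OF _ large_idempotent] unfolding star_def by (simp add: Collect_conj_eq)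

lemma large_translates_star: "x \<in> star F \<Longrightarrow> large {y. x + y \<in> star F}"
proof -
  assume "x \<in> star F"
  then have "large {y. x + y \<in> F}" unfolding star_def by blast
  moreover from large_idempotent[OF this] have "large {y. large {z. x + y + z \<in> F}}"
    by (simp add: add.assoc)
  ultimately show ?thesis using large_conj unfolding star_def by simp
qed

text \<open>\<open>translate_limit s t\<close> means \<open>s + p = t\<close>, i.e.\ \<open>s + y\<close> tends to \<open>t\<close> as \<open>y\<close> tends to \<open>p\<close>.\<close>

definition translate_limit :: "'a \<Rightarrow> 'a \<Rightarrow> bool" where
  "translate_limit s t \<longleftrightarrow> large {y. s + y = t}"

lemma translate_limit_unique: "translate_limit s t \<Longrightarrow> translate_limit s t' \<Longrightarrow> t = t'"
  unfolding translate_limit_def using large_conj large_nonempty by fastforce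

lemma not_large_translate_limit: "\<not> large {y. translate_limit y t}"
  using large_of_large_translates[of "{t}"] not_large_singleton
  unfolding translate_limit_def by auto

lemma not_large_translate_limit_add:
  "\<not> translate_limit s t \<Longrightarrow> \<not> large {y. translate_limit (s + y) t}"
  using large_of_large_translates[of "{z. s + z = t}"]
  unfolding translate_limit_def by (auto simp: add.assoc)

definition with_limits :: "'a set \<Rightarrow> 'a set" where
  "with_limits A = A \<union> {t. \<exists>s\<in>A. translate_limit s t}"

lemma finite_with_limits: "finite A \<Longrightarrow> finite (with_limits A)"
proof -
  assume "finite A"
  moreover have "{t. translate_limit s t} \<subseteq> {THE t. translate_limit s t}" for s
    using translate_limit_unique by (blast intro: the_equality[symmetric])
  then have "finite {t. translate_limit s t}" for s using finite_subset by blast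
  moreover have "with_limits A = A \<union> (\<Union>s\<in>A. {t. translate_limit s t})"
    unfolding with_limits_def by blast
  ultimately show ?thesis by simp
qed

text \<open>
  Invariant of the construction: \<open>X\<close> and \<open>Y\<close> are the finite sums formed so far from the
  even- and from the odd-indexed terms. Later terms are drawn from \<open>p\<close>, so a sum \<open>s\<close> can only
  be moved onto \<open>t\<close> if \<open>s + p = t\<close>; therefore the limits must be kept apart as well.
\<close>

definition separated :: "'a set \<Rightarrow> 'a set \<Rightarrow> 'a set \<Rightarrow> bool" where
  "separated F X Y \<longleftrightarrow>
     finite X \<and> finite Y \<and> X \<union> Y \<subseteq> star F \<and> with_limits X \<inter> with_limits Y = {}"

lemma separated_sym: "separated F X Y \<Longrightarrow> separated F Y X"
  unfolding separated_def by blast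

definition good_extension :: "'a set \<Rightarrow> 'a set \<Rightarrow> 'a set \<Rightarrow> 'a \<Rightarrow> bool" where
  "good_extension F X Y y \<longleftrightarrow> y \<notin> X \<and> y \<in> star F \<and> (\<forall>s\<in>X. s + y \<in> star F) \<and>
     with_limits (insert y ((\<lambda>s. s + y) ` X)) \<inter> with_limits Y = {}"

lemma good_extension_notin: "good_extension F X Y y \<Longrightarrow> y \<notin> X \<union> Y"
  unfolding good_extension_def with_limits_def by blast

lemma separated_extend_sums:
  assumes "separated F X Y" "good_extension F X Y y"
  shows "separated F (extend_sums X y) Y"
proof -
  have "with_limits (extend_sums X y) = with_limits X \<union> with_limits (insert y ((\<lambda>s. s + y) ` X))"
    unfolding extend_sums_def with_limits_def by blast
  then show ?thesis
    using assms unfolding separated_def good_extension_def extend_sums_def by auto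
qed

lemma good_extension_exists:
  assumes "large F" "separated F X Y"
  shows "\<exists>y. good_extension F X Y y"
proof -
  define Z where "Z = with_limits Y"
  have fin: "finite X" "finite Z" and XF: "X \<subseteq> star F"
    using assms(2) finite_with_limits unfolding separated_def Z_def by auto
  have no_limit: "\<not> translate_limit s t" if "s \<in> X" "t \<in> Z" for s t
    using assms(2) that unfolding separated_def Z_def with_limits_def by blast
  have "large {y. y \<notin> X \<union> Z}" using fin by (intro large_notin_finite) simp
  moreover have "large {y. y \<in> star F}" using assms(1) large_star by simp
  moreover have "large {y. \<forall>s\<in>X. s + y \<in> star F}"
    using fin(1) XF by (intro large_Ball) (auto intro: large_translates_star)
  moreover have "large {y. \<forall>t\<in>Z. \<not> translate_limit y t}"
    using fin(2) by (intro large_Ball large_Collect_not not_large_translate_limit)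
  moreover have "large {y. \<forall>t\<in>Z. \<forall>s\<in>X. s + y \<noteq> t}"
    using fin no_limit unfolding translate_limit_def by (intro large_Ball large_Collect_not) auto
  moreover have "large {y. \<forall>t\<in>Z. \<forall>s\<in>X. \<not> translate_limit (s + y) t}"
    using fin no_limit
    by (intro large_Ball large_Collect_not not_large_translate_limit_add) auto
  ultimately have "large {y. y \<notin> X \<union> Z \<and> y \<in> star F \<and> (\<forall>s\<in>X. s + y \<in> star F)
      \<and> (\<forall>t\<in>Z. \<not> translate_limit y t) \<and> (\<forall>t\<in>Z. \<forall>s\<in>X. s + y \<noteq> t)
      \<and> (\<forall>t\<in>Z. \<forall>s\<in>X. \<not> translate_limit (s + y) t)}"
    by (intro large_conj)
  then obtain y where "y \<notin> X \<union> Z" "y \<in> star F" "\<forall>s\<in>X. s + y \<in> star F"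
    "\<forall>t\<in>Z. \<not> translate_limit y t" "\<forall>t\<in>Z. \<forall>s\<in>X. s + y \<noteq> t"
    "\<forall>t\<in>Z. \<forall>s\<in>X. \<not> translate_limit (s + y) t"
    using large_nonempty by blast
  then have "good_extension F X Y y"
    unfolding good_extension_def with_limits_def[of "insert _ _"] Z_def by blast
  then show ?thesis ..
qed

definition next_term :: "'a set \<Rightarrow> 'a set \<times> 'a set \<Rightarrow> 'a" where
  "next_term F S = (SOME y. good_extension F (fst S) (snd S) y)"

fun stage :: "'a set \<Rightarrow> nat \<Rightarrow> 'a set \<times> 'a set" where
  "stage F 0 = ({}, {})"
| "stage F (Suc n) = (snd (stage F n), extend_sums (fst (stage F n)) (next_term F (stage F n)))"

definition generator :: "'a set \<Rightarrow> nat \<Rightarrow> 'a" where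
  "generator F n = next_term F (stage F n)"

lemma stage_eq_parity_sums:
  "stage F n = (parity_sums (generator F) n (even n), parity_sums (generator F) n (odd n))"
proof (induction n)
  case 0
  then show ?case by (simp add: parity_sums_0)
next
  case (Suc n)
  then show ?case
    by (simp add: generator_def parity_sums_Suc_same parity_sums_Suc_other[of n "odd n"])
qed

lemma good_extension_next_term:
  "large F \<Longrightarrow> separated F (fst S) (snd S) \<Longrightarrow> good_extension F (fst S) (snd S) (next_term F S)"
  unfolding next_term_def using good_extension_exists by (rule someI_ex)

lemma separated_stage: "large F \<Longrightarrow> separated F (fst (stage F n)) (snd (stage F n))"
proof (induction n)
  case 0
  then show ?case unfolding separated_def with_limits_def by simp
next
  case (Suc n)
  then show ?case
    using separated_extend_sums good_extension_next_term separated_sym by simp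
qed

lemma separated_parity_sums:
  "large F \<Longrightarrow> separated F (parity_sums (generator F) n True) (parity_sums (generator F) n False)"
  using separated_stage[of F n] stage_eq_parity_sums[of F n] separated_sym
  by (cases "even n") auto

lemma parity_sums_generator_subset: "large F \<Longrightarrow> parity_sums (generator F) n p \<subseteq> F"
  using separated_parity_sums[of F n] star_subset unfolding separated_def by (cases p) auto

lemma parity_sums_generator_disjoint:
  assumes "large F"
  shows "parity_sums (generator F) m True \<inter> parity_sums (generator F) n False = {}"
proof -
  have "parity_sums (generator F) k True \<inter> parity_sums (generator F) k False = {}" for k
    using separated_parity_sums[OF assms, of k] unfolding separated_def with_limits_def by blast
  then show ?thesis
    using parity_sums_mono[of m "max m n"] parity_sums_mono[of n "max m n"] by fastforce
qed

lemma inj_generator: "large F \<Longrightarrow> inj (generator F)"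
proof (rule linorder_injI)
  fix i j :: nat assume "large F" "i < j"
  have "generator F i \<in> parity_sums (generator F) j (even i)"
    using \<open>i < j\<close> unfolding parity_sums_def by (intro CollectI exI[of _ "[i]"]) simp
  moreover have "generator F j \<notin> fst (stage F j) \<union> snd (stage F j)"
    using good_extension_notin good_extension_next_term separated_stage \<open>large F\<close>
    unfolding generator_def by blast
  ultimately show "generator F i \<noteq> generator F j"
    using stage_eq_parity_sums[of F j] by (cases "even i"; cases "even j") auto
qed

lemma disjoint_proper_IP_subsets:
  assumes "large F"
  obtains G H where "G \<subseteq> F" "H \<subseteq> F" "proper_IP G" "proper_IP H" "G \<inter> H = {}"
proof
  let ?b = "generator F"
  have mono: "strict_mono (\<lambda>k::nat. 2 * k)" "strict_mono (\<lambda>k::nat. 2 * k + 1)"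
    by (simp_all add: strict_mono_def)
  have sums: "FS (?b \<circ> (\<lambda>k. 2 * k)) \<subseteq> (\<Union>n. parity_sums ?b n True)"
      "FS (?b \<circ> (\<lambda>k. 2 * k + 1)) \<subseteq> (\<Union>n. parity_sums ?b n False)"
    using mono by (simp_all add: FS_comp_subset_parity_sums)
  show "FS (?b \<circ> (\<lambda>k. 2 * k)) \<subseteq> F" "FS (?b \<circ> (\<lambda>k. 2 * k + 1)) \<subseteq> F"
    using sums parity_sums_generator_subset[OF assms] by fastforce+
  show "proper_IP (FS (?b \<circ> (\<lambda>k. 2 * k)))" "proper_IP (FS (?b \<circ> (\<lambda>k. 2 * k + 1)))"
    using proper_IP_FS_comp inj_generator[OF assms] mono by blast+
  show "FS (?b \<circ> (\<lambda>k. 2 * k)) \<inter> FS (?b \<circ> (\<lambda>k. 2 * k + 1)) = {}"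
    using sums parity_sums_generator_disjoint[OF assms] by fastforce
qed

end

lemma IP_partition_regular_Diff_proper_IP:
  assumes "IP_partition_regular F"
  obtains G where "G \<subseteq> F" "proper_IP G" "IP_partition_regular (F - G)"
proof (rule ccontr)
  assume "\<not> thesis"
  then have poor: "G \<subseteq> F \<Longrightarrow> proper_IP G \<Longrightarrow> \<not> IP_partition_regular (F - G)" for G
    using that by blast
  text \<open>The traces on \<open>F\<close> now form a free idempotent ultrafilter containing \<open>F\<close>.\<close>
  define large where "large B \<longleftrightarrow> IP_partition_regular (F \<inter> B)" for B
  have large_split: "large A \<Longrightarrow> large (A \<inter> B) \<or> large (A - B)" for A B
    unfolding large_def using IP_partition_regular_Int_or_Diff by (metis Int_Diff Int_assoc)
  have large_mono: "large B" if "large A" "A \<subseteq> B" for A B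
    using that IP_partition_regular_mono unfolding large_def by blast
  have large_proper_IP: "large G" if "G \<subseteq> F" "proper_IP G" for G
    using large_split[of UNIV G] assms poor[OF that] that
    unfolding large_def by (simp add: Diff_eq Int_absorb1 Int_commute)
  have large_disjoint: False if "large A" "large B" "A \<inter> B = {}" for A B
  proof -
    have "proper_IP (F \<inter> A)"
      using that(1) IP_partition_regular_imp_proper_IP unfolding large_def by blast
    moreover have "F \<inter> B \<subseteq> F - F \<inter> A" using that(3) by blast
    ultimately show False
      using poor[of "F \<inter> A"] that(2) IP_partition_regular_mono unfolding large_def by blast
  qed
  interpret free_idempotent_ultrafilter large
  proof
    show "large (A \<inter> B)" if "large A" "large B" for A B
      using large_split[OF that(1), of B] large_disjoint[of "A - B" B] that(2) by blast
    show "large (- A) \<longleftrightarrow> \<not> large A" for A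
      using large_split[of UNIV A] large_disjoint[of A "- A"] assms
      unfolding large_def by (auto simp: Diff_eq)
    show "\<not> large {t}" for t
      unfolding large_def by (rule not_IP_partition_regular_subset_singleton) blast
    show "large {x. large {y. x + y \<in> A}}" if "large A" for A
    proof (rule large_translates_if_large_proper_IP[where F = F])
      show "proper_IP (F \<inter> A)"
        using that unfolding large_def by (rule IP_partition_regular_imp_proper_IP)
    qed (use large_mono large_proper_IP in blast)+
  qed (rule large_mono)
  have "large F" using assms unfolding large_def by simp
  then obtain G H where "G \<subseteq> F" "H \<subseteq> F" "proper_IP G" "proper_IP H" "G \<inter> H = {}"
    by (rule disjoint_proper_IP_subsets)
  then show False using large_disjoint[of G H] large_proper_IP[of G] large_proper_IP[of H] by simp
qed

lemma IP_partition_regular_disjoint_family: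
  fixes F :: "'a::semigroup_add set"
  assumes "IP_partition_regular F"
  obtains G :: "nat \<Rightarrow> 'a set"
  where "\<And>n. G n \<subseteq> F" "\<And>n. proper_IP (G n)" "\<And>m n. m \<noteq> n \<Longrightarrow> G m \<inter> G n = {}"
proof -
  obtain split :: "'a set \<Rightarrow> 'a set" where split: "\<And>F. IP_partition_regular F \<Longrightarrow>
      split F \<subseteq> F \<and> proper_IP (split F) \<and> IP_partition_regular (F - split F)"
    using IP_partition_regular_Diff_proper_IP by metis
  define rest where "rest n = ((\<lambda>F. F - split F) ^^ n) F" for n
  have regular: "IP_partition_regular (rest n)" for n
    by (induction n) (use assms split in \<open>auto simp: rest_def\<close>)
  have antitone: "rest n \<subseteq> rest m" if "m \<le> n" for m n
    using that by (induction n rule: dec_induct) (auto simp: rest_def)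
  have disjoint: "split (rest m) \<inter> split (rest n) = {}" if "m < n" for m n
    using split[OF regular, of n] antitone[of "Suc m" n] that by (auto simp: rest_def)
  show thesis
  proof
    show "split (rest n) \<subseteq> F" "proper_IP (split (rest n))" for n
      using split[OF regular, of n] antitone[of 0 n] by (auto simp: rest_def)
    show "split (rest m) \<inter> split (rest n) = {}" if "m \<noteq> n" for m n
      using disjoint[of m n] disjoint[of n m] that by (cases "m < n") auto
  qed
qed

theorem theorem5p4:
  fixes c :: "'a::semigroup_add \<Rightarrow> 'c"
  assumes "\<forall>d :: 'a \<Rightarrow> nat. finite_coloring d \<longrightarrow>
             (\<exists>A. proper_IP A \<and> monochromatic d A)"
    and "finite_coloring c"
  shows "\<exists>F :: nat \<Rightarrow> 'a set.
           (\<forall>n. proper_IP (F n) \<and> monochromatic c (F n)) \<and>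
           (\<forall>m n. m \<noteq> n \<longrightarrow> F m \<inter> F n = {})"
proof -
  have "IP_partition_regular (UNIV :: 'a set)"
    using assms(1) unfolding IP_partition_regular_def by blast
  moreover have "UNIV = (\<Union>k\<in>range c. {x. c x = k})" by blast
  ultimately obtain k where "IP_partition_regular {x. c x = k}"
    using assms(2) IP_partition_regular_UN unfolding finite_coloring_def by metis
  then obtain G :: "nat \<Rightarrow> 'a set" where "\<And>n. G n \<subseteq> {x. c x = k}" "\<And>n. proper_IP (G n)"
      "\<And>m n. m \<noteq> n \<Longrightarrow> G m \<inter> G n = {}"
    by (rule IP_partition_regular_disjoint_family) blast
  then show ?thesis unfolding monochromatic_def by (intro exI[of _ G]) blast
qed

end
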